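(* Take $\Omega=(0,\infty)$. The set $S=(0,\tfrac14]\cup\{\tfrac13,1\}$ is a fundamental set for the gamma function, i.e. $\mathrm{Cl}_\Omega(S)=(0,\infty)$.
   Context: Let $\Omega$ be either $(0,\infty)$ or $D=\mathbb{C}\setminus\{0,-1,-2,\dots\}$. An admissible instance (relative to $\Omega$) is one of the following finite lists of points, all entries of which are required to lie in $\Omega$: (i) $(z+1,\,z)$ for $z\in\Omega$ with $z+1\in\Omega$ (corresponding to the identity $\Gamma(z+1)=z\Gamma(z)$); (ii) $(z,\,1-z)$ for $z\in\Omega\setminus\mathbb{Z}$ with $1-z\in\Omega$ (corresponding to $\Gamma(z)\Gamma(1-z)=\pi/\sin(\pi z)$); (iii) for an integer $n\ge 2$, $\big(z,\,\tfrac{z}{n},\,\tfrac{z+1}{n},\dots,\tfrac{z+n-1}{n}\big)$ (corresponding to Gauss's multiplication formula $(2\pi)^{(n-1)/2}n^{1/2-z}\Gamma(z)=\prod_{j=0}^{n-1}\Gamma(\tfrac{z+j}{n})$). For $B\subseteq\Omega$, a point $p\in\Omega$ is obtained from $B$ in one step if there is an admissible instance in which $p$ occurs exactly once as an entry and every other entry lies in $B$. Set $B_0=B$, $B_{i+1}=B_i\cup\{p: p \text{ obtained from } B_i \text{ in one step}\}$, and $\mathrm{Cl}_\Omega(B)=\bigcup_{i\ge0}B_i$ (the set of points at which the value of $\Gamma$ is determined by its values on $B$ via finitely many applications of the identities). For $A,B\subseteq\Omega$ write $A\preceq B$ if $A\subseteq \mathrm{Cl}_\Omega(B)$. A set $S\subseteq\Omega$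 is a fundamental set (for $\Gamma$ on $\Omega$) if $\mathrm{Cl}_\Omega(S)=\Omega$. *)

theory Defs
  imports Complex_Main
begin

text \<open>Admissible instances relative to a domain \<Omega>: finite lists of points, all in \<Omega>,
 of one of the three shapes (shift, reflection, Gauss multiplication).\<close>
definition admissible :: "'a::field_char_0 set \<Rightarrow> 'a list \<Rightarrow> bool" where
  "admissible \<Omega> L \<longleftrightarrow> set L \<subseteq> \<Omega> \<and>
     ((\<exists>z. L = [z + 1, z]) \<or>
      (\<exists>z. z \<notin> \<int> \<and> L = [z, 1 - z]) \<or>
      (\<exists>z (n::nat). n \<ge> 2 \<and> L = z # map (\<lambda>j. (z + of_nat j) / of_nat n) [0..<n]))"

definition one_step :: "'a::field_char_0 set \<Rightarrow> 'a set \<Rightarrow> 'a \<Rightarrow> bool" where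
  "one_step \<Omega> B p \<longleftrightarrow> p \<in> \<Omega> \<and>
     (\<exists>L. admissible \<Omega> L \<and> count_list L p = 1 \<and> (\<forall>q\<in>set L. q \<noteq> p \<longrightarrow> q \<in> B))"

primrec cl_iter :: "'a::field_char_0 set \<Rightarrow> 'a set \<Rightarrow> nat \<Rightarrow> 'a set" where
  "cl_iter \<Omega> B 0 = B"
| "cl_iter \<Omega> B (Suc i) = cl_iter \<Omega> B i \<union> {p. one_step \<Omega> (cl_iter \<Omega> B i) p}"

definition Cl :: "'a::field_char_0 set \<Rightarrow> 'a set \<Rightarrow> 'a set" where
  "Cl \<Omega> B = (\<Union>i. cl_iter \<Omega> B i)"

definition fundamental_set :: "'a::field_char_0 set \<Rightarrow> 'a set \<Rightarrow> bool" where
  "fundamental_set \<Omega> S \<longleftrightarrow> Cl \<Omega> S = \<Omega>"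

end

theory Submission
  imports Defs
begin

text \<open>
  The shift, reflection and duplication formulas give the closure under three moves on
  \<open>(0, \<infinity>)\<close>: \<open>z \<mapsto> z + 1\<close>, \<open>z \<mapsto> 1 - z\<close> on \<open>(0,1)\<close>, and \<open>x\<close> from \<open>2x\<close> and \<open>x + 1/2\<close>.
  For \<open>y \<in> (1/4, 1/2)\<close> the point \<open>1/2 - y\<close> lies in \<open>(0, 1/4]\<close>, so reflecting it gives
  \<open>y + 1/2\<close>, and reflecting \<open>1 - 2y\<close> gives \<open>2y\<close>; hence \<open>y\<close> is reached as soon as
  \<open>T y = 1 - 2y\<close> is. The map \<open>T\<close> doubles the distance to its fixed point \<open>1/3\<close>, so every
  \<open>y \<in> (0, 1/2)\<close> other than \<open>1/3\<close> is driven into \<open>(0, 1/4]\<close> after finitely many steps.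
  Duplication at \<open>1/2\<close> needs only \<open>1\<close>, reflection covers \<open>(1/2, 1)\<close>, and shifts cover the rest.
\<close>

lemma cl_iter_mono: "i \<le> j \<Longrightarrow> cl_iter \<Omega> B i \<subseteq> cl_iter \<Omega> B j"
  by (induction j) (auto simp: le_Suc_eq)

lemma finite_subset_cl_iter:
  assumes "finite F" "F \<subseteq> Cl \<Omega> B"
  shows "\<exists>i. F \<subseteq> cl_iter \<Omega> B i"
  using assms
proof (induction F rule: finite_induct)
  case empty
  then show ?case by auto
next
  case (insert x F)
  then obtain i j where "F \<subseteq> cl_iter \<Omega> B i" "x \<in> cl_iter \<Omega> B j"
    by (auto simp: Cl_def)
  then have "insert x F \<subseteq> cl_iter \<Omega> B (max i j)"
    using cl_iter_mono[of i "max i j" \<Omega> B] cl_iter_mono[of j "max i j" \<Omega> B] by auto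
  then show ?case ..
qed

lemma Cl_closed_one_step:
  assumes "one_step \<Omega> (Cl \<Omega> B) p"
  shows "p \<in> Cl \<Omega> B"
proof -
  obtain L where L: "p \<in> \<Omega>" "admissible \<Omega> L" "count_list L p = 1"
    and others: "set L - {p} \<subseteq> Cl \<Omega> B"
    using assms unfolding one_step_def by blast
  obtain i where "set L - {p} \<subseteq> cl_iter \<Omega> B i"
    using finite_subset_cl_iter[OF _ others] by blast
  with L have "one_step \<Omega> (cl_iter \<Omega> B i) p"
    unfolding one_step_def by blast
  then have "p \<in> cl_iter \<Omega> B (Suc i)" by simp
  then show ?thesis unfolding Cl_def by blast
qed

lemma subset_Cl: "B \<subseteq> Cl \<Omega> B"
  unfolding Cl_def by (metis UNIV_I UN_upper cl_iter.simps(1))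

lemma Cl_subset: "B \<subseteq> \<Omega> \<Longrightarrow> Cl \<Omega> B \<subseteq> \<Omega>"
proof -
  assume "B \<subseteq> \<Omega>"
  then have "cl_iter \<Omega> B i \<subseteq> \<Omega>" for i
    by (induction i) (auto simp: one_step_def)
  then show ?thesis unfolding Cl_def by blast
qed

lemma Cl_shift:
  assumes "z \<in> Cl \<Omega> B" "z \<in> \<Omega>" "z + 1 \<in> \<Omega>"
  shows "z + 1 \<in> Cl \<Omega> B"
  by (rule Cl_closed_one_step)
    (use assms in \<open>auto simp: one_step_def admissible_def intro!: exI[of _ "[z + 1, z]"]\<close>)

lemma Cl_reflect:
  assumes "z \<in> Cl \<Omega> B" "z \<notin> \<int>" "z \<in> \<Omega>" "1 - z \<in> \<Omega>"
  shows "1 - z \<in> Cl \<Omega> B"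
proof (cases "1 - z = z")
  case True
  with assms(1) show ?thesis by (simp only:)
next
  case False
  show ?thesis
    by (rule Cl_closed_one_step)
      (use assms False in \<open>auto simp: one_step_def admissible_def intro!: exI[of _ "[z, 1 - z]"]\<close>)
qed

lemma duplication_instance:
  "z # map (\<lambda>j. (z + of_nat j) / of_nat 2) [0..<2] = [z, z / 2, (z + 1) / (2::'a::field_char_0)]"
  by (simp add: upt_rec)

lemma admissible_duplication:
  fixes x :: "'a::field_char_0"
  assumes "{x, 2 * x, x + 1/2} \<subseteq> \<Omega>"
  shows "admissible \<Omega> [2 * x, x, x + 1/2]"
proof -
  have shape: "[2 * x, x, x + 1/2] = 2 * x # map (\<lambda>j. (2 * x + of_nat j) / of_nat 2) [0..<2]"
    unfolding duplication_instance by (simp add: add_divide_distrib)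
  have "set [2 * x, x, x + 1/2] \<subseteq> \<Omega>" using assms by simp
  then show ?thesis
    unfolding admissible_def
    by (intro conjI disjI2 exI[of _ "2 * x"] exI[of _ "2::nat"] order_refl shape)
qed

lemma Cl_duplication:
  fixes x :: "'a::field_char_0"
  assumes "2 * x \<in> Cl \<Omega> B" "x + 1/2 \<in> Cl \<Omega> B" "{x, 2 * x, x + 1/2} \<subseteq> \<Omega>"
  shows "x \<in> Cl \<Omega> B"
proof (cases "x = 0")
  case True
  with assms(1) show ?thesis by simp
next
  case False
  then have "count_list [2 * x, x, x + 1/2] x = 1" by simp
  with admissible_duplication[OF assms(3)] assms have "one_step \<Omega> (Cl \<Omega> B) x"
    unfolding one_step_def by (intro conjI exI[of _ "[2 * x, x, x + 1/2]"]) auto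
  then show ?thesis by (rule Cl_closed_one_step)
qed

lemma not_Ints_between_0_1:
  fixes z :: real
  assumes "0 < z" "z < 1"
  shows "z \<notin> \<int>"
proof
  assume "z \<in> \<int>"
  then obtain k where "z = of_int k" by (auto elim: Ints_cases)
  with assms show False by auto
qed

lemma Cl_pos_reflect:
  fixes z :: real
  assumes "z \<in> Cl {0<..} B" "0 < z" "z < 1"
  shows "1 - z \<in> Cl {0<..} B"
  using Cl_reflect[OF assms(1) not_Ints_between_0_1[OF assms(2,3)]] assms(2,3) by simp

lemma Cl_pos_from_doubling_map:
  fixes y :: real
  assumes base: "{0<..1/4} \<subseteq> Cl {0<..} B"
    and y: "1/4 < y" "y < 1/2" and Ty: "1 - 2 * y \<in> Cl {0<..} B"
  shows "y \<in> Cl {0<..} B"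
proof -
  have "1 - (1 - 2 * y) \<in> Cl {0<..} B"
    using Cl_pos_reflect[OF Ty] y by simp
  then have double: "2 * y \<in> Cl {0<..} B" by simp
  have "1/2 - y \<in> Cl {0<..} B"
    using y by (intro subsetD[OF base]) simp
  then have "1 - (1/2 - y) \<in> Cl {0<..} B"
    by (rule Cl_pos_reflect) (use y in simp_all)
  then have "y + 1/2 \<in> Cl {0<..} B" by (simp add: algebra_simps)
  with double show ?thesis
    by (rule Cl_duplication) (use y in auto)
qed

lemma Cl_pos_away_from_third:
  fixes y :: real
  assumes base: "{0<..1/4} \<subseteq> Cl {0<..} B"
    and "0 < y" "y < 1/2" "1/12 \<le> \<bar>y - 1/3\<bar> * 2 ^ k"
  shows "y \<in> Cl {0<..} B"
  using assms(2-)
proof (induction k arbitrary: y)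
  case 0
  show ?case
  proof (cases "y \<le> 1/4")
    case True
    with base 0 show ?thesis by auto
  next
    case False
    with 0 have "1 - 2 * y \<in> {0<..1/4}" by (auto simp: abs_if split: if_splits)
    with base have "1 - 2 * y \<in> Cl {0<..} B" by blast
    with False 0 show ?thesis
      using Cl_pos_from_doubling_map[OF base] by simp
  qed
next
  case (Suc k)
  show ?case
  proof (cases "y \<le> 1/4")
    case True
    with base Suc.prems show ?thesis by auto
  next
    case False
    have "\<bar>(1 - 2 * y) - 1/3\<bar> * 2 ^ k = \<bar>y - 1/3\<bar> * 2 ^ Suc k"
      by (simp add: abs_if)
    with Suc.prems False have "1 - 2 * y \<in> Cl {0<..} B"
      by (intro Suc.IH) auto
    with False Suc.prems show ?thesis
      using Cl_pos_from_doubling_map[OF base] by simp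
  qed
qed

lemma Cl_pos_half_interval:
  fixes y :: real
  assumes base: "{0<..1/4} \<union> {1/3, 1} \<subseteq> Cl {0<..} B" and y: "0 < y" "y \<le> 1/2"
  shows "y \<in> Cl {0<..} B"
proof -
  have one: "1 \<in> Cl {0<..} B" and third: "1/3 \<in> Cl {0<..} B"
    using base by auto
  consider "y = 1/2" | "y = 1/3" | "y < 1/2" "y \<noteq> 1/3" using y by linarith
  then show ?thesis
  proof cases
    case 1
    have "(1/2::real) \<in> Cl {0<..} B"
      using Cl_duplication[of "1/2::real" "{0<..}" B] one by simp
    with 1 show ?thesis by (simp only:)
  next
    case 2
    with third show ?thesis by (simp only:)
  next
    case 3
    then have dist: "\<bar>y - 1/3\<bar> > 0" by simp
    obtain k :: nat where "1/12 / \<bar>y - 1/3\<bar> < 2 ^ k"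
      using real_arch_pow[of 2 "1/12 / \<bar>y - 1/3\<bar>"] by auto
    with dist have "1/12 \<le> \<bar>y - 1/3\<bar> * 2 ^ k"
      by (simp add: field_simps)
    with base y 3 show ?thesis
      using Cl_pos_away_from_third[of B y k] by auto
  qed
qed

lemma Cl_pos_unit_interval:
  fixes y :: real
  assumes base: "{0<..1/4} \<union> {1/3, 1} \<subseteq> Cl {0<..} B" and y: "0 < y" "y \<le> 1"
  shows "y \<in> Cl {0<..} B"
proof -
  consider "y \<le> 1/2" | "y = 1" | "1/2 < y" "y < 1" using y by linarith
  then show ?thesis
  proof cases
    case 1
    with Cl_pos_half_interval[OF base] y show ?thesis by simp
  next
    case 2
    with base show ?thesis by auto
  next
    case 3
    then have "1 - y \<in> Cl {0<..} B"
      using Cl_pos_half_interval[OF base, of "1 - y"] by simp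
    then have "1 - (1 - y) \<in> Cl {0<..} B"
      using Cl_pos_reflect[of "1 - y" B] 3 by simp
    then show ?thesis by simp
  qed
qed

lemma Cl_pos_from_unit_interval:
  fixes y :: real
  assumes unit: "{0<..1} \<subseteq> Cl {0<..} B" and "0 < y"
  shows "y \<in> Cl {0<..} B"
proof -
  have "y \<in> Cl {0<..} B" if "0 < y" "y \<le> real n + 1" for n y
    using that
  proof (induction n arbitrary: y)
    case 0
    with unit show ?case by auto
  next
    case (Suc n)
    show ?case
    proof (cases "y \<le> real n + 1")
      case True
      with Suc show ?thesis by simp
    next
      case False
      with Suc.prems have "y - 1 \<in> Cl {0<..} B"
        by (intro Suc.IH) auto
      then have "y - 1 + 1 \<in> Cl {0<..} B"
        by (rule Cl_shift) (use False in auto)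
      then show ?thesis by simp
    qed
  qed
  moreover obtain n :: nat where "y \<le> real n"
    using real_arch_simple by blast
  then have "y \<le> real n + 1" by simp
  ultimately show ?thesis using \<open>0 < y\<close> by blast
qed

theorem mainTheorem5:
  shows "fundamental_set {0::real<..} ({0<..1/4} \<union> {1/3, 1})"
  unfolding fundamental_set_def
proof
  let ?S = "{0<..1/4} \<union> {1/3, 1::real}"
  show "Cl {0<..} ?S \<subseteq> {0<..}"
    by (rule Cl_subset) auto
  have "{0<..1} \<subseteq> Cl {0<..} ?S"
    using Cl_pos_unit_interval[OF subset_Cl] by auto
  then show "{0<..} \<subseteq> Cl {0<..} ?S"
    using Cl_pos_from_unit_interval by blast
qed

end
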